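(* Let $X$ be a path connected, locally path connected topological space whose first singular homology group $H_1(X;\mathbb Z)$ is trivial. Let $K\subset X$ be a closed connected set. If $X\setminus K$ is connected, then the topological boundary $\partial K$ of $K$ in $X$ is connected. *)

theory Defs
  imports "HOL-Homology.Homology"
begin

end

theory Submission
  imports Defs
begin

text \<open>Suppose the frontier \<open>F = K - int K\<close> splits into disjoint nonempty closed sets \<open>A\<close> and \<open>B\<close>,
and put \<open>U = X - A\<close>, \<open>V = X - B\<close>. Then \<open>U \<inter> V = X - F\<close> is the disjoint union of the open sets
\<open>int K\<close> and \<open>X - K\<close>. Connectedness of \<open>K\<close> and of \<open>X - K\<close> yields an interior point \<open>x\<close> of \<open>K\<close> and a
point \<open>y \<notin> K\<close> joined by a path in \<open>U\<close> and by a path in \<open>V\<close>. Since \<open>H\<^sub>1(X) = 0\<close> the resulting loop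
bounds a singular 2-chain; subdividing it until every simplex lies in \<open>U\<close> or in \<open>V\<close> (the
Mayer--Vietoris argument) shows that \<open>y - x\<close>, the boundary of the path in \<open>U\<close>, is also the boundary
of a 1-chain in \<open>U \<inter> V\<close>. But a singular 1-simplex in \<open>U \<inter> V\<close> lies entirely inside or entirely
outside \<open>int K\<close>, so the boundary of such a chain has signed vertex count \<open>0\<close> in \<open>int K\<close>, whereas
\<open>y - x\<close> has count \<open>-1\<close>.\<close>

definition point_simplex :: "'a \<Rightarrow> (nat \<Rightarrow> real) \<Rightarrow> 'a" where
  "point_simplex x = restrict (\<lambda>_. x) (standard_simplex 0)"

definition path_simplex :: "(real \<Rightarrow> 'a) \<Rightarrow> (nat \<Rightarrow> real) \<Rightarrow> 'a" where
  "path_simplex g = restrict (g \<circ> (\<lambda>t. t 0)) (standard_simplex 1)"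

lemma singular_simplex_path_simplex:
  assumes "pathin X g"
  shows "singular_simplex 1 X (path_simplex g)"
proof -
  have "continuous_map (subtopology (powertop_real UNIV) (standard_simplex (Suc 0)))
          euclideanreal (\<lambda>t. t 0)"
    by (metis (mono_tags) UNIV_I continuous_map_from_subtopology continuous_map_product_projection)
  then have "continuous_map (subtopology (powertop_real UNIV) (standard_simplex (Suc 0)))
               (top_of_set {0..1}) (\<lambda>t. t 0)"
    by (auto simp: continuous_map_in_subtopology standard_simplex_def)
  then show ?thesis
    using assms by (force simp: path_simplex_def pathin_def singular_simplex_def continuous_map_compose)
qed

lemma chain_boundary_path_simplex:
  "chain_boundary 1 (frag_of (path_simplex g))
     = frag_of (point_simplex (g 0)) - frag_of (point_simplex (g 1))"
proof -
  have "singular_face (Suc 0) 0 (g \<circ> (\<lambda>t. t 0)) = point_simplex (g 0)"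
       "singular_face (Suc 0) (Suc 0) (g \<circ> (\<lambda>t. t 0)) = point_simplex (g 1)"
    by (auto simp: point_simplex_def singular_face_def simplical_face_def standard_simplex_0)
  then show ?thesis
    by (simp add: chain_boundary_of path_simplex_def)
qed

text \<open>\<open>\<lambda>j. if j = 0 then 1 else 0\<close> is the only point of \<open>standard_simplex 0\<close>, so a 0-simplex is
counted iff its vertex lies in \<open>S\<close>; the values lie in \<open>unit \<Rightarrow>\<^sub>0 int\<close>, a copy of \<open>\<int>\<close>.\<close>

definition augmentation_on :: "'a set \<Rightarrow> 'a chain \<Rightarrow> unit \<Rightarrow>\<^sub>0 int" where
  "augmentation_on S c =
     frag_extend (\<lambda>f. if f (\<lambda>j. if j = 0 then 1 else 0) \<in> S then frag_of () else 0) c"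

lemma augmentation_on_of:
  "augmentation_on S (frag_of f) = (if f (\<lambda>j. if j = 0 then 1 else 0) \<in> S then frag_of () else 0)"
  by (simp add: augmentation_on_def)

lemma augmentation_on_add [simp]:
  "augmentation_on S (a + b) = augmentation_on S a + augmentation_on S b"
  by (simp add: augmentation_on_def frag_extend_add)

lemma augmentation_on_diff [simp]:
  "augmentation_on S (a - b) = augmentation_on S a - augmentation_on S b"
  by (simp add: augmentation_on_def frag_extend_diff)

lemma augmentation_on_point_simplex [simp]:
  "augmentation_on S (frag_of (point_simplex x)) = (if x \<in> S then frag_of () else 0)"
  by (simp add: augmentation_on_of point_simplex_def)

lemma augmentation_on_chain_boundary_clopen:
  assumes "openin Y S" "closedin Y S" "singular_chain 1 Y c"
  shows "augmentation_on S (chain_boundary 1 c) = 0"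
  using assms(3) unfolding singular_chain_def
proof (induction rule: frag_induction)
  case zero
  then show ?case by (simp add: augmentation_on_def)
next
  case (one f)
  let ?v = "(\<lambda>j. if j = 0 then 1 else 0) :: nat \<Rightarrow> real"
  have "continuous_map (subtopology (powertop_real UNIV) (standard_simplex 1)) Y f"
    using one by (simp add: singular_simplex_def)
  moreover have "connectedin (subtopology (powertop_real UNIV) (standard_simplex 1)) (standard_simplex 1)"
    by (simp add: connectedin_subtopology connectedin_standard_simplex)
  ultimately have "connectedin Y (f ` standard_simplex 1)"
    by (rule connectedin_continuous_map_image)
  then have "f ` standard_simplex 1 \<subseteq> S \<or> disjnt (f ` standard_simplex 1) S"
    using assms(1,2) clopenin_eq_frontier_of connectedin_Int_frontier_of
    by (metis Diff_eq_empty_iff Int_empty_right disjnt_def)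
  moreover have "simplical_face 0 ?v \<in> standard_simplex 1" "simplical_face 1 ?v \<in> standard_simplex 1"
    using simplical_face_in_standard_simplex[of 1 0 ?v] simplical_face_in_standard_simplex[of 1 1 ?v]
    by auto
  ultimately show ?case
    by (auto simp: chain_boundary_of augmentation_on_of singular_face_def disjnt_iff)
next
  case (diff a b)
  then show ?case by (simp add: chain_boundary_diff)
qed

lemma singular_subdivision_power_add:
  "(singular_subdivision p ^^ n) (a + b)
     = (singular_subdivision p ^^ n) a + (singular_subdivision p ^^ n) b"
  by (induction n) (auto simp: singular_subdivision_add)

lemma singular_chain_singular_subdivision_power:
  "singular_chain p X c \<Longrightarrow> singular_chain p X ((singular_subdivision p ^^ n) c)"
  by (induction n) (auto simp: singular_chain_singular_subdivision)

lemma chain_boundary_singular_subdivision_power: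
  assumes "singular_chain p X c"
  shows "chain_boundary p ((singular_subdivision p ^^ n) c)
           = (singular_subdivision (p - Suc 0) ^^ n) (chain_boundary p c)"
proof (induction n)
  case (Suc n)
  then show ?case
    using chain_boundary_singular_subdivision
      [OF singular_chain_singular_subdivision_power[OF assms, of n]] by simp
qed simp

lemma singular_subdivision_power_zero:
  "singular_chain 0 X c \<Longrightarrow> (singular_subdivision 0 ^^ n) c = c"
  by (induction n) (simp_all add: singular_subdivision_zero)

lemma singular_subdivision_power_split:
  assumes "openin X U" "openin X V" "topspace X \<subseteq> U \<union> V" "singular_chain p X c"
  obtains n cU cV where "singular_chain p (subtopology X U) cU" "singular_chain p (subtopology X V) cV"
    "(singular_subdivision p ^^ n) c = cU + cV"
proof -
  obtain n where n: "\<And>m f. \<lbrakk>n \<le> m; f \<in> Poly_Mapping.keys ((singular_subdivision p ^^ m) c)\<rbrakk>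
                          \<Longrightarrow> \<exists>W \<in> {U,V}. f \<in> standard_simplex p \<rightarrow> W"
    using sufficient_iterated_singular_subdivision_exists[of "{U,V}" X p c] assms by auto
  have "singular_chain p X ((singular_subdivision p ^^ n) c)"
    using assms(4) by (rule singular_chain_singular_subdivision_power)
  with n[OF order_refl] have "Poly_Mapping.keys ((singular_subdivision p ^^ n) c)
      \<subseteq> singular_simplex_set p (subtopology X U) \<union> singular_simplex_set p (subtopology X V)"
    by (fastforce simp: singular_chain_def singular_simplex_subtopology)
  then show thesis
    using that unfolding singular_chain_def by (metis frag_split)
qed

lemma singular_chain_subtopology_Int:
  "\<lbrakk>singular_chain p (subtopology X U) c; singular_chain p (subtopology X V) c\<rbrakk>
     \<Longrightarrow> singular_chain p (subtopology X (U \<inter> V)) c"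
  by (auto simp: singular_chain_subtopology)

lemma chain_boundary_in_Int_if_sum_bounds:
  assumes U: "openin X U" and V: "openin X V" and UV: "topspace X \<subseteq> U \<union> V"
    and a: "singular_chain 1 (subtopology X U) a" and b: "singular_chain 1 (subtopology X V) b"
    and d: "singular_chain 2 X d" "chain_boundary 2 d = a + b"
  obtains z where "singular_chain 1 (subtopology X (U \<inter> V)) z" "chain_boundary 1 z = chain_boundary 1 a"
proof -
  obtain n dU dV where dU: "singular_chain 2 (subtopology X U) dU"
    and dV: "singular_chain 2 (subtopology X V) dV" and split: "(singular_subdivision 2 ^^ n) d = dU + dV"
    by (rule singular_subdivision_power_split[OF U V UV d(1)])
  define sa where "sa = (singular_subdivision 1 ^^ n) a"
  define sb where "sb = (singular_subdivision 1 ^^ n) b"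
  define z where "z = sa - chain_boundary 2 dU"
  have "sa + sb = (singular_subdivision 1 ^^ n) (chain_boundary 2 d)"
    unfolding sa_def sb_def d(2) singular_subdivision_power_add ..
  also have "\<dots> = chain_boundary 2 dU + chain_boundary 2 dV"
    using chain_boundary_singular_subdivision_power[OF d(1), of n]
    by (simp add: split chain_boundary_add)
  finally have z_V: "z = chain_boundary 2 dV - sb"
    unfolding z_def by (simp add: algebra_simps)
  have "singular_chain 1 (subtopology X U) z"
    unfolding z_def sa_def
    using singular_chain_boundary[OF dU] singular_chain_singular_subdivision_power[OF a]
    by (simp add: singular_chain_diff)
  moreover have "singular_chain 1 (subtopology X V) z"
    unfolding z_V sb_def
    using singular_chain_boundary[OF dV] singular_chain_singular_subdivision_power[OF b]
    by (simp add: singular_chain_diff)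
  moreover have "chain_boundary 1 z = chain_boundary 1 a"
  proof -
    have "singular_chain 0 (subtopology X U) (chain_boundary 1 a)"
      using singular_chain_boundary[OF a] by simp
    \<comment> \<open>subdivision fixes 0-chains, so subdividing \<open>a\<close> does not change its boundary\<close>
    then have "chain_boundary 1 sa = chain_boundary 1 a"
      using chain_boundary_singular_subdivision_power[OF a, of n]
      by (simp add: sa_def singular_subdivision_power_zero)
    moreover have "chain_boundary 1 (chain_boundary 2 dU) = 0"
      using chain_boundary_boundary[OF dU] by simp
    ultimately show ?thesis
      unfolding z_def chain_boundary_diff by simp
  qed
  ultimately show thesis
    using that singular_chain_subtopology_Int by blast
qed

lemma singular_relboundary_if_trivial_homology_group:
  assumes "trivial_group (homology_group p X)" "singular_relcycle p X {} c"
  shows "singular_relboundary p X {} c"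
proof -
  have "homologous_rel_set p X {} c \<in> carrier (homology_group p X)"
    using assms(2) carrier_relative_homology_group[of p X "{}"] by auto
  then have "homologous_rel_set p X {} c = singular_relboundary_set p X {}"
    using assms(1) one_relative_homology_group[of p X "{}"] unfolding trivial_group_def by auto
  then show ?thesis
    using homologous_rel_set_eq_relboundary by blast
qed

lemma not_path_component_of_across_clopen_Int:
  assumes H1: "trivial_group (homology_group 1 X)"
    and U: "openin X U" and V: "openin X V" and UV: "topspace X \<subseteq> U \<union> V"
    and S: "openin (subtopology X (U \<inter> V)) S" "closedin (subtopology X (U \<inter> V)) S"
    and xy: "x \<in> S" "y \<notin> S"
    and yx: "path_component_of (subtopology X U) y x"
  shows "\<not> path_component_of (subtopology X V) x y"
proof
  assume "path_component_of (subtopology X V) x y"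
  then obtain g2 where g2: "pathin (subtopology X V) g2" "g2 0 = x" "g2 1 = y"
    by (auto simp: path_component_of_def)
  obtain g1 where g1: "pathin (subtopology X U) g1" "g1 0 = y" "g1 1 = x"
    using yx by (auto simp: path_component_of_def)
  define a where "a = frag_of (path_simplex g1)"
  define b where "b = frag_of (path_simplex g2)"
  have a: "singular_chain 1 (subtopology X U) a" and b: "singular_chain 1 (subtopology X V) b"
    using singular_simplex_path_simplex[OF g1(1)] singular_simplex_path_simplex[OF g2(1)]
    by (simp_all add: a_def b_def singular_chain_of)
  have "singular_relcycle 1 X {} (a + b)"
    using a b unfolding singular_cycle
    by (auto simp: singular_chain_subtopology singular_chain_add chain_boundary_add a_def b_def
        chain_boundary_path_simplex g1 g2 simp del: One_nat_def)
  then obtain d where "singular_chain 2 X d" "chain_boundary 2 d = a + b"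
    using singular_relboundary_if_trivial_homology_group[of 1 X] H1
    by (auto simp: singular_boundary numeral_2_eq_2)
  then obtain z where z: "singular_chain 1 (subtopology X (U \<inter> V)) z"
    "chain_boundary 1 z = chain_boundary 1 a"
    using chain_boundary_in_Int_if_sum_bounds[OF U V UV a b] by blast
  have "augmentation_on S (chain_boundary 1 z) = 0"
    using augmentation_on_chain_boundary_clopen[OF S z(1)] .
  then show False
    using xy by (simp add: z(2) a_def chain_boundary_path_simplex g1 del: One_nat_def)
qed

lemma path_connectedin_iff_connectedin_open:
  assumes "locally_path_connected_space X" "openin X S"
  shows "path_connectedin X S \<longleftrightarrow> connectedin X S"
  using path_connected_eq_connected_space[OF locally_path_connected_space_open_subset[OF assms]]
  by (simp add: path_connectedin_def connectedin_def)

lemma openin_path_component_of_set_subtopology: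
  assumes "locally_path_connected_space X" "openin X U"
  shows "openin X (path_component_of_set (subtopology X U) y)"
    and "openin X (U - path_component_of_set (subtopology X U) y)"
proof -
  let ?C = "path_component_of_set (subtopology X U) y"
  have lpc: "locally_path_connected_space (subtopology X U)"
    using assms by (rule locally_path_connected_space_open_subset)
  show "openin X ?C"
    using openin_path_component_of_locally_path_connected_space[OF lpc] assms(2)
    by (rule openin_trans_full)
  have "openin (subtopology X U) (U - ?C)"
    using closedin_path_component_of_locally_path_connected_space[OF lpc, of y] openin_subset[OF assms(2)]
    by (simp add: closedin_def Int_absorb1)
  then show "openin X (U - ?C)"
    using assms(2) by (rule openin_trans_full)
qed

lemma frontier_of_closedin_eq:
  "closedin X K \<Longrightarrow> X frontier_of K = K - X interior_of K"
  by (simp add: frontier_of_def closure_of_closedin)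

lemma not_connectedin_closedin_split:
  assumes "closedin X F" "\<not> connectedin X F"
  obtains A B where "closedin X A" "closedin X B" "A \<inter> B = {}" "A \<union> B = F" "A \<noteq> {}" "B \<noteq> {}"
proof -
  obtain E1 E2 where E: "closedin X E1" "closedin X E2" "F \<subseteq> E1 \<union> E2" "E1 \<inter> E2 \<inter> F = {}"
    "E1 \<inter> F \<noteq> {}" "E2 \<inter> F \<noteq> {}"
    using assms closedin_subset[OF assms(1)] unfolding connectedin_closedin by blast
  show thesis
    by (rule that[of "E1 \<inter> F" "E2 \<inter> F"]) (use E assms(1) in \<open>auto intro: closedin_Int\<close>)
qed

lemma interior_of_clopen_in_complement_frontier:
  assumes "closedin X K"
  shows "openin (subtopology X (topspace X - X frontier_of K)) (X interior_of K)"
    and "closedin (subtopology X (topspace X - X frontier_of K)) (X interior_of K)"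
proof -
  have "(topspace X - X frontier_of K) \<inter> K = X interior_of K"
    using frontier_of_closedin_eq[OF assms] interior_of_subset[of X K]
      interior_of_subset_topspace[of X K] by blast
  then show "closedin (subtopology X (topspace X - X frontier_of K)) (X interior_of K)"
    using closedin_subtopology_Int_closed[OF assms] by metis
  show "openin (subtopology X (topspace X - X frontier_of K)) (X interior_of K)"
    using frontier_of_closedin_eq[OF assms] interior_of_subset_topspace[of X K]
    by (intro subset_openin_subtopology openin_interior_of) blast
qed

lemma path_components_cover_around_frontier_split:
  assumes lpc: "locally_path_connected_space X" and X: "connected_space X" and K: "closedin X K"
    and Y: "path_connectedin X (topspace X - K)" "y \<in> topspace X - K"
    and A: "closedin X A" and B: "closedin X B"
    and AB: "A \<inter> B = {}" "A \<union> B = X frontier_of K"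
  shows "topspace X \<subseteq> path_component_of_set (subtopology X (topspace X - A)) y
                       \<union> path_component_of_set (subtopology X (topspace X - B)) y"
    (is "_ \<subseteq> ?C \<union> ?D")
proof -
  have U: "openin X (topspace X - A)" and V: "openin X (topspace X - B)"
    using A B by (simp_all add: openin_diff)
  note C = openin_path_component_of_set_subtopology[OF lpc U, of y]
    and D = openin_path_component_of_set_subtopology[OF lpc V, of y]
  have AB_K: "A \<subseteq> K" "B \<subseteq> K" "A \<inter> X interior_of K = {}" "B \<inter> X interior_of K = {}"
    using AB(2) frontier_of_closedin_eq[OF K] by blast+
  have CD: "?C \<subseteq> topspace X - A" "?D \<subseteq> topspace X - B"
    using path_component_of_subset_topspace by (metis topspace_subtopology_subset Diff_subset)+
  have "path_connectedin (subtopology X (topspace X - A)) (topspace X - K)"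
    "path_connectedin (subtopology X (topspace X - B)) (topspace X - K)"
    using Y(1) AB_K by (auto simp: path_connectedin_subtopology)
  then have YC: "topspace X - K \<subseteq> ?C" and YD: "topspace X - K \<subseteq> ?D"
    using Y(2) by (simp_all add: path_component_of_maximal)
  then have "topspace X - A - ?C \<subseteq> K" "topspace X - B - ?D \<subseteq> K"
    by auto
  then have "topspace X - A - ?C \<subseteq> X interior_of K" "topspace X - B - ?D \<subseteq> X interior_of K"
    using C(2) D(2) by (simp_all add: interior_of_maximal)
  then have "topspace X - (?C \<union> ?D) = (topspace X - A - ?C) \<inter> (topspace X - B - ?D)"
    using AB(1) AB_K CD by auto
  then have "openin X (topspace X - (?C \<union> ?D))"
    using C(2) D(2) by auto
  moreover have "closedin X (topspace X - (?C \<union> ?D))"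
    using C(1) D(1) by (intro closedin_diff closedin_topspace openin_Un)
  ultimately have "topspace X - (?C \<union> ?D) = {} \<or> topspace X - (?C \<union> ?D) = topspace X"
    using X connected_space_clopen_in by meson
  moreover have "y \<in> ?C"
    using YC Y(2) by blast
  ultimately show ?thesis
    using Y(2) by blast
qed

lemma interior_point_joined_around_frontier_split:
  assumes lpc: "locally_path_connected_space X" and X: "connected_space X"
    and K: "closedin X K" "connectedin X K"
    and Y: "path_connectedin X (topspace X - K)" "y \<in> topspace X - K"
    and A: "closedin X A" and B: "closedin X B"
    and AB: "A \<inter> B = {}" "A \<union> B = X frontier_of K" "A \<noteq> {}" "B \<noteq> {}"
  obtains x where "x \<in> X interior_of K"
    "path_component_of (subtopology X (topspace X - A)) y x"
    "path_component_of (subtopology X (topspace X - B)) y x"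
proof (rule ccontr)
  define C where "C = path_component_of_set (subtopology X (topspace X - A)) y"
  define D where "D = path_component_of_set (subtopology X (topspace X - B)) y"
  have CA: "C \<inter> A = {}" and DB: "D \<inter> B = {}"
    using path_component_of_subset_topspace by (fastforce simp: C_def D_def)+
  have AK: "A \<subseteq> K" "B \<subseteq> K"
    using AB(2) frontier_of_subset_closedin[OF K(1)] by auto
  assume "\<not> thesis"
  then have "X interior_of K \<inter> C \<inter> D = {}"
    using that by (auto simp: C_def D_def)
  then have "K \<subseteq> (topspace X - C) \<union> (topspace X - D)"
    using CA DB AB(2) frontier_of_closedin_eq[OF K(1)] closedin_subset[OF K(1)] by auto
  moreover have "(topspace X - C) \<inter> (topspace X - D) \<inter> K = {}"
    using path_components_cover_around_frontier_split[OF lpc X K(1) Y A B AB(1,2)]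
    by (auto simp: C_def D_def)
  moreover have "(topspace X - C) \<inter> K \<noteq> {}" "(topspace X - D) \<inter> K \<noteq> {}"
    using AB(3,4) AK CA DB closedin_subset[OF A] closedin_subset[OF B] by auto
  moreover have "closedin X (topspace X - C)" "closedin X (topspace X - D)"
    using openin_path_component_of_set_subtopology(1)[OF lpc] A B
    by (simp_all add: C_def D_def closedin_diff openin_diff)
  ultimately show False
    using K(2) unfolding connectedin_closedin by blast
qed

theorem lemmaA1:
  fixes X :: "'a topology" and K :: "'a set"
  assumes "path_connected_space X"
    and "locally_path_connected_space X"
    and "trivial_group (homology_group 1 X)"
    and "closedin X K"
    and "connectedin X K"
    and "connectedin X (topspace X - K)"
  shows "connectedin X (X frontier_of K)"
proof (rule ccontr)
  assume "\<not> connectedin X (X frontier_of K)"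
  then obtain A B where A: "closedin X A" and B: "closedin X B"
    and AB: "A \<inter> B = {}" "A \<union> B = X frontier_of K" "A \<noteq> {}" "B \<noteq> {}"
    by (rule not_connectedin_closedin_split[OF closedin_frontier_of])
  have "K \<noteq> topspace X"
    using AB(2,3) by auto
  then obtain y where y: "y \<in> topspace X - K"
    using closedin_subset[OF assms(4)] by blast
  have "path_connectedin X (topspace X - K)"
    using assms(2,4,6) path_connectedin_iff_connectedin_open by (blast intro: openin_diff)
  then obtain x where x: "x \<in> X interior_of K"
    "path_component_of (subtopology X (topspace X - A)) y x"
    "path_component_of (subtopology X (topspace X - B)) y x"
    by (rule interior_point_joined_around_frontier_split[OF assms(2)
          path_connected_imp_connected_space[OF assms(1)] assms(4,5) _ y A B AB])
  have "(topspace X - A) \<inter> (topspace X - B) = topspace X - X frontier_of K"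
    using AB(2) by blast
  then have "\<not> path_component_of (subtopology X (topspace X - B)) x y"
    using interior_of_clopen_in_complement_frontier[OF assms(4)] AB(1) y interior_of_subset[of X K]
    by (intro not_path_component_of_across_clopen_Int[OF assms(3) _ _ _ _ _ x(1) _ x(2)])
      (auto intro: openin_diff A B)
  then show False
    using path_component_of_sym[OF x(3)] by contradiction
qed

end
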